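(* Let $N=\{1,\dots,n\}$. Every set function $s:2^N\to\mathbb{R}$ is a generalized coverage function: there exist a finite set $U$ with $|U|\le 2^{|N|}$, subsets $S_1,\dots,S_n\subseteq U$, a weight function $w:U\to\mathbb{R}$ and a constant $c\in\mathbb{R}$ such that for all $A\subseteq N$, $$s_A = c+\mathbf{w}\Big(\bigcup_{i\in A}S_i\Big),$$ where $\mathbf{w}(S)=\sum_{u\in S}w(u)$ for $S\subseteq U$.
   Context: A generalized coverage function on $N$ is a set function of the form $A\mapsto c+\mathbf{w}(\bigcup_{i\in A}S_i)$ for some collection of subsets $S_1,\dots,S_n$ of a global set $U$, a constant $c\in\mathbb{R}$, and a real weight function $w$ on $U$ (weights may be negative or zero) extended additively to subsets by $\mathbf{w}(S)=\sum_{u\in S}w(u)$. *)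

theory Defs
  imports Complex_Main
begin

definition wt :: "('u \<Rightarrow> real) \<Rightarrow> 'u set \<Rightarrow> real" where
  "wt w S = (\<Sum>u\<in>S. w u)"

end

theory Submission
  imports Defs
begin

text \<open>By Moebius inversion over the superset order, every f on the subsets of a finite N
  has the form f A = (\<Sum>T | A \<subseteq> T \<and> T \<subseteq> N. v T). The T \<in> Pow N with \<not> A \<subseteq> T form
  the union of the sets S i = {T \<in> Pow N. i \<notin> T} over i \<in> A, so for f = -s we get
  s A = - v (Pow N) + v (\<Union>i\<in>A. S i): a generalized coverage function on the universe Pow N,
  which is then relabelled by the 2^|N| numbers below 2^|N|.\<close>

lemma superset_sum_representation_below:
  fixes f :: "'a set \<Rightarrow> 'b::ab_group_add"
  assumes "finite N"
  shows "\<exists>v. \<forall>A. A \<subseteq> N \<longrightarrow> card (N - A) < k \<longrightarrow> (\<Sum>T | A \<subseteq> T \<and> T \<subseteq> N. v T) = f A"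
proof (induction k)
  case 0
  then show ?case by simp
next
  case (Suc k)
  then obtain v where v: "\<And>A. A \<subseteq> N \<Longrightarrow> card (N - A) < k \<Longrightarrow>
      (\<Sum>T | A \<subseteq> T \<and> T \<subseteq> N. v T) = f A"
    by blast
  \<comment> \<open>At codimension k, v' T is forced: all strict supersets of T have smaller codimension.\<close>
  define v' where
    "v' T = (if card (N - T) = k then f T - (\<Sum>T' | T \<subset> T' \<and> T' \<subseteq> N. v T') else v T)" for T
  have v'_eq_v: "v' T = v T" if "A \<subseteq> N" "A \<subset> T" "T \<subseteq> N" "card (N - A) \<le> k" for A T
  proof -
    have "card (N - T) < card (N - A)"
      using that assms by (intro psubset_card_mono) auto
    with that show ?thesis by (simp add: v'_def)
  qed
  have "(\<Sum>T | A \<subseteq> T \<and> T \<subseteq> N. v' T) = f A" if A: "A \<subseteq> N" "card (N - A) < Suc k" for A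
  proof -
    have fin: "finite {T. A \<subset> T \<and> T \<subseteq> N}"
      by (rule finite_subset[of _ "Pow N"]) (use assms in auto)
    have split: "{T. A \<subseteq> T \<and> T \<subseteq> N} = insert A {T. A \<subset> T \<and> T \<subseteq> N}"
      using A by auto
    have upper: "(\<Sum>T | A \<subset> T \<and> T \<subseteq> N. v' T) = (\<Sum>T | A \<subset> T \<and> T \<subseteq> N. v T)"
      using A by (intro sum.cong) (simp_all add: v'_eq_v)
    have sum_v': "(\<Sum>T | A \<subseteq> T \<and> T \<subseteq> N. v' T) = v' A + (\<Sum>T | A \<subset> T \<and> T \<subseteq> N. v T)"
      unfolding split upper[symmetric] using fin by simp
    show ?thesis
    proof (cases "card (N - A) = k")
      case True
      then have "v' A = f A - (\<Sum>T | A \<subset> T \<and> T \<subseteq> N. v T)"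
        by (simp add: v'_def)
      with sum_v' show ?thesis by simp
    next
      case False
      with A have "card (N - A) < k" by simp
      moreover have "(\<Sum>T | A \<subseteq> T \<and> T \<subseteq> N. v T) = v A + (\<Sum>T | A \<subset> T \<and> T \<subseteq> N. v T)"
        unfolding split using fin by simp
      moreover have "v' A = v A"
        using False by (simp add: v'_def)
      ultimately show ?thesis
        using v[OF A(1)] sum_v' by simp
    qed
  qed
  then show ?case by blast
qed

lemma superset_sum_representation:
  fixes f :: "'a set \<Rightarrow> 'b::ab_group_add"
  assumes "finite N"
  obtains v where "\<And>A. A \<subseteq> N \<Longrightarrow> f A = (\<Sum>T | A \<subseteq> T \<and> T \<subseteq> N. v T)"
proof -
  obtain v where v: "\<And>A. A \<subseteq> N \<Longrightarrow> card (N - A) < Suc (card N) \<Longrightarrow>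
      (\<Sum>T | A \<subseteq> T \<and> T \<subseteq> N. v T) = f A"
    using superset_sum_representation_below[OF assms] by blast
  show ?thesis
  proof (rule that)
    fix A assume "A \<subseteq> N"
    moreover have "card (N - A) < Suc (card N)"
      using assms by (simp add: card_mono le_imp_less_Suc)
    ultimately show "f A = (\<Sum>T | A \<subseteq> T \<and> T \<subseteq> N. v T)"
      using v by simp
  qed
qed

lemma UN_Pow_not_member: "(\<Union>i\<in>A. {T \<in> Pow N. i \<notin> T}) = Pow N - {T. A \<subseteq> T \<and> T \<subseteq> N}"
  by auto

lemma coverage_representation_on_Pow:
  fixes s :: "'a set \<Rightarrow> real"
  assumes "finite N"
  obtains w c where "\<And>A. A \<subseteq> N \<Longrightarrow> s A = c + wt w (\<Union>i\<in>A. {T \<in> Pow N. i \<notin> T})"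
proof -
  obtain v where v: "\<And>A. A \<subseteq> N \<Longrightarrow> - s A = (\<Sum>T | A \<subseteq> T \<and> T \<subseteq> N. v T)"
    using superset_sum_representation[OF assms, where f = "\<lambda>A. - s A"] by blast
  have "s A = - wt v (Pow N) + wt v (\<Union>i\<in>A. {T \<in> Pow N. i \<notin> T})" if "A \<subseteq> N" for A
  proof -
    have "{T. A \<subseteq> T \<and> T \<subseteq> N} \<subseteq> Pow N" by blast
    then have "wt v (Pow N - {T. A \<subseteq> T \<and> T \<subseteq> N}) = wt v (Pow N) - (\<Sum>T | A \<subseteq> T \<and> T \<subseteq> N. v T)"
      unfolding wt_def using assms by (simp add: sum_diff)
    with v[OF that] show ?thesis
      unfolding UN_Pow_not_member by simp
  qed
  then show ?thesis by (rule that)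
qed

lemma wt_UN_image_inj_on:
  assumes "inj_on h V" and "\<And>i. i \<in> I \<Longrightarrow> S i \<subseteq> V"
  shows "wt (w \<circ> inv_into V h) (\<Union>i\<in>I. h ` S i) = wt w (\<Union>i\<in>I. S i)"
proof -
  have sub: "(\<Union>i\<in>I. S i) \<subseteq> V" using assms(2) by blast
  then have "inj_on h (\<Union>i\<in>I. S i)" using assms(1) by (rule inj_on_subset[rotated])
  then have "wt (w \<circ> inv_into V h) (h ` (\<Union>i\<in>I. S i)) = wt (w \<circ> inv_into V h \<circ> h) (\<Union>i\<in>I. S i)"
    by (simp add: wt_def sum.reindex)
  also have "\<dots> = wt w (\<Union>i\<in>I. S i)"
    unfolding wt_def using sub assms(1) by (intro sum.cong) auto
  finally show ?thesis by (simp add: image_UN)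
qed
theorem theorem1:
  fixes n :: nat and s :: "nat set \<Rightarrow> real"
  shows "\<exists>(U :: nat set) (S :: nat \<Rightarrow> nat set) (w :: nat \<Rightarrow> real) (c :: real).
           finite U \<and> card U \<le> 2 ^ n \<and> (\<forall>i\<in>{1..n}. S i \<subseteq> U) \<and>
           (\<forall>A. A \<subseteq> {1..n} \<longrightarrow> s A = c + wt w (\<Union>i\<in>A. S i))"
proof -
  define N where "N = {1..n}"
  have fin: "finite N" by (simp add: N_def)
  obtain w c where cover: "\<And>A. A \<subseteq> N \<Longrightarrow> s A = c + wt w (\<Union>i\<in>A. {T \<in> Pow N. i \<notin> T})"
    using coverage_representation_on_Pow[OF fin, of s] by blast
  define U where "U = {0..<(2::nat) ^ n}"
  have "card (Pow N) = 2 ^ n" by (simp add: N_def card_Pow)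
  then obtain h where h: "bij_betw h (Pow N) U"
    using ex_bij_betw_finite_nat[of "Pow N"] fin by (auto simp: U_def)
  define S where "S i = h ` {T \<in> Pow N. i \<notin> T}" for i
  show ?thesis
  proof (intro exI conjI)
    show "finite U" "card U \<le> 2 ^ n" by (simp_all add: U_def)
    show "\<forall>i\<in>{1..n}. S i \<subseteq> U"
      using h by (auto simp: S_def bij_betw_def)
    have "{T \<in> Pow N. i \<notin> T} \<subseteq> Pow N" for i by blast
    with bij_betw_imp_inj_on[OF h] cover
    show "\<forall>A. A \<subseteq> {1..n} \<longrightarrow> s A = c + wt (w \<circ> inv_into (Pow N) h) (\<Union>i\<in>A. S i)"
      unfolding S_def N_def by (simp add: wt_UN_image_inj_on)
  qed
qed

end
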